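(* In a finite dynamic game as described in the context, suppose $K^i$ is unilaterally sufficient information for player $i$, and let $j\neq i$ be another player. Then for every behavioral strategy profile $g$, every $t$, every $h_t^i\in\mathcal{H}_t^i$ with compression $k_t^i$, and every $h_t^j\in\mathcal{H}_t^j$, $$\Pr^g(h_t^i\mid h_t^j)=\Pr^g(h_t^i\mid k_t^i)\,\Pr^g(k_t^i\mid h_t^j),$$ whenever $\Pr^g(k_t^i)>0$ and $\Pr^g(h_t^j)>0$.
   Context: Game model: finite set of players $\mathcal{I}$, times $\mathcal{T}=\{1,\dots,T\}$. At time $t$ each player $i$ takes action $U_t^i\in\mathcal{U}_t^i$, obtains reward $R_t^i\in[-1,1]$ and learns new information $Z_t^i\in\mathcal{Z}_t^i$. There is a state $X_t\in\mathcal{X}_t$ with $(X_{t+1},Z_t,R_t)=f_t(X_t,U_t,W_t)$ for fixed functions $f_t$. Primitive random variables $(X_1,H_1)$ and $W_1,\dots,W_T$ are mutually independent with commonly known distributions. All sets are finite. Perfect recall: $H_t^i=(H_1^i,Z_{1:t-1}^i)\in\mathcal{H}_t^i$, and $U_t^i$ is a component of $Z_t^i$. Behavioral strategy $g_t^i:\mathcal{H}_t^i\to\Delta(\mathcal{U}_t^i)$. A realization is admissible under $g$ if it has positive probability under $g$. Compression: $K_1^i=\iota_1^i(H_1^i)$, $K_t^i=\iota_t^i(K_{t-1}^i,Z_{t-1}^i)$ for fixed maps, finite value sets $\mathcal{K}_t^i$; $k_t^i$ is the compression of $h_t^i$. Unilaterally sufficient information (USI): $K^i$ is USI for player $i$ if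 there exist $F_t^{i,g^i}:\mathcal{K}_t^i\to\Delta(\mathcal{H}_t^i)$ depending only on $g^i$ and $\Phi_t^{i,g^{-i}}:\mathcal{K}_t^i\to\Delta(\mathcal{X}_t\times\mathcal{H}_t^{-i})$ depending only on $g^{-i}$ with $\Pr^g(x_t,h_t\mid k_t^i)=F_t^{i,g^i}(h_t^i\mid k_t^i)\Phi_t^{i,g^{-i}}(x_t,h_t^{-i}\mid k_t^i)$ for all behavioral profiles $g$, all $t$, all $k_t^i$ admissible under $g$ (with $x_t,h_t^i,h_t^{-i}$ ranging independently; the left side is $0$ if they disagree on shared components). *)

theory Defs
  imports "HOL-Probability.Probability"
begin

(* A history of player i at time t is a pair (h1, zs) with h1 = H_1^i and
   zs = [Z_1^i, ..., Z_{t-1}^i] (perfect recall); so length zs = t - 1.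
   f t x u w = (X_{t+1}, Z_t, R_t).
   P1 is the joint law of (X_1, H_1), PW t the law of W_t; all mutually
   independent (built into the construction of the trajectory law below).
   A behavioural strategy profile g: g t i h is the mixed action of player i
   at time t after history h. *)

type_synonym ('h,'z) hist = "'h \<times> 'z list"

definition behavioral ::
  "(nat \<Rightarrow> 'p \<Rightarrow> 'u set) \<Rightarrow> (nat \<Rightarrow> 'p \<Rightarrow> ('h,'z) hist \<Rightarrow> 'u pmf) \<Rightarrow> bool" where
  "behavioral Uset g \<longleftrightarrow> (\<forall>t i h. set_pmf (g t i h) \<subseteq> Uset t i)"

definition game_model ::
  "nat \<Rightarrow> (nat \<Rightarrow> 'p \<Rightarrow> 'u set)
   \<Rightarrow> (nat \<Rightarrow> 'x \<Rightarrow> ('p \<Rightarrow> 'u) \<Rightarrow> 'w \<Rightarrow> 'x \<times> ('p \<Rightarrow> 'z) \<times> ('p \<Rightarrow> real))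
   \<Rightarrow> (nat \<Rightarrow> 'p \<Rightarrow> 'z \<Rightarrow> 'u) \<Rightarrow> bool" where
  "game_model T Uset f act \<longleftrightarrow>
     (\<forall>t\<in>{1..T}. \<forall>x u w. (\<forall>j. u j \<in> Uset t j) \<longrightarrow>
        (case f t x u w of (x', z, r) \<Rightarrow>
           (\<forall>i. act t i (z i) = u i) \<and> (\<forall>i. \<bar>r i\<bar> \<le> 1)))"

(* one step of the dynamics: from the law of (X_t, H_t) to that of (X_{t+1}, H_{t+1}) *)
definition step ::
  "(nat \<Rightarrow> 'w pmf)
   \<Rightarrow> (nat \<Rightarrow> 'x \<Rightarrow> ('p::finite \<Rightarrow> 'u) \<Rightarrow> 'w \<Rightarrow> 'x \<times> ('p \<Rightarrow> 'z) \<times> ('p \<Rightarrow> real))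
   \<Rightarrow> (nat \<Rightarrow> 'p \<Rightarrow> ('h,'z) hist \<Rightarrow> 'u pmf) \<Rightarrow> nat
   \<Rightarrow> ('x \<times> ('p \<Rightarrow> ('h,'z) hist)) pmf \<Rightarrow> ('x \<times> ('p \<Rightarrow> ('h,'z) hist)) pmf" where
  "step PW f g t D =
     bind_pmf D (\<lambda>(x, h).
     bind_pmf (Pi_pmf UNIV undefined (\<lambda>i. g t i (h i))) (\<lambda>u.
     bind_pmf (PW t) (\<lambda>w.
       (case f t x u w of (x', z, r) \<Rightarrow>
          return_pmf (x', \<lambda>i. (fst (h i), snd (h i) @ [z i]))))))"

(* traj_aux n = law of (X_{n+1}, H_{n+1}) *)
fun traj_aux ::
  "('x \<times> ('p \<Rightarrow> 'h)) pmf \<Rightarrow> (nat \<Rightarrow> 'w pmf)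
   \<Rightarrow> (nat \<Rightarrow> 'x \<Rightarrow> ('p::finite \<Rightarrow> 'u) \<Rightarrow> 'w \<Rightarrow> 'x \<times> ('p \<Rightarrow> 'z) \<times> ('p \<Rightarrow> real))
   \<Rightarrow> (nat \<Rightarrow> 'p \<Rightarrow> ('h,'z) hist \<Rightarrow> 'u pmf) \<Rightarrow> nat
   \<Rightarrow> ('x \<times> ('p \<Rightarrow> ('h,'z) hist)) pmf" where
  "traj_aux P1 PW f g 0 = map_pmf (\<lambda>(x, h1). (x, \<lambda>i. (h1 i, []))) P1"
| "traj_aux P1 PW f g (Suc n) = step PW f g (Suc n) (traj_aux P1 PW f g n)"

(* Pr^g of an event about (X_t, H_t), for t \<ge> 1 *)
definition Pr ::
  "('x \<times> ('p \<Rightarrow> 'h)) pmf \<Rightarrow> (nat \<Rightarrow> 'w pmf)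
   \<Rightarrow> (nat \<Rightarrow> 'x \<Rightarrow> ('p::finite \<Rightarrow> 'u) \<Rightarrow> 'w \<Rightarrow> 'x \<times> ('p \<Rightarrow> 'z) \<times> ('p \<Rightarrow> real))
   \<Rightarrow> (nat \<Rightarrow> 'p \<Rightarrow> ('h,'z) hist \<Rightarrow> 'u pmf) \<Rightarrow> nat
   \<Rightarrow> ('x \<times> ('p \<Rightarrow> ('h,'z) hist)) set \<Rightarrow> real" where
  "Pr P1 PW f g t A = measure_pmf.prob (traj_aux P1 PW f g (t - 1)) A"

definition cPr where
  "cPr P1 PW f g t A B = Pr P1 PW f g t (A \<inter> B) / Pr P1 PW f g t B"

(* compression: K_1 = iota1 i H_1^i, K_{n+2} = iota (n+2) i K_{n+1} Z_{n+1} *)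
fun kcomp_aux :: "('p \<Rightarrow> 'h \<Rightarrow> 'k) \<Rightarrow> (nat \<Rightarrow> 'p \<Rightarrow> 'k \<Rightarrow> 'z \<Rightarrow> 'k)
   \<Rightarrow> 'p \<Rightarrow> 'h \<Rightarrow> 'z list \<Rightarrow> nat \<Rightarrow> 'k" where
  "kcomp_aux \<iota>1 \<iota> i h1 zs 0 = \<iota>1 i h1"
| "kcomp_aux \<iota>1 \<iota> i h1 zs (Suc n) = \<iota> (Suc (Suc n)) i (kcomp_aux \<iota>1 \<iota> i h1 zs n) (zs ! n)"

definition kcomp :: "('p \<Rightarrow> 'h \<Rightarrow> 'k) \<Rightarrow> (nat \<Rightarrow> 'p \<Rightarrow> 'k \<Rightarrow> 'z \<Rightarrow> 'k)
   \<Rightarrow> 'p \<Rightarrow> ('h,'z) hist \<Rightarrow> 'k" where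
  "kcomp \<iota>1 \<iota> i h = kcomp_aux \<iota>1 \<iota> i (fst h) (snd h) (length (snd h))"

(* F receives only g^i,
   Phi receives only g^{-i} (player i's component replaced by undefined).
   h_t^{-i} is represented by a profile of histories whose i-th entry is
   undefined. *)
definition USI ::
  "nat \<Rightarrow> (nat \<Rightarrow> 'p \<Rightarrow> 'u set) \<Rightarrow> ('x \<times> ('p \<Rightarrow> 'h)) pmf \<Rightarrow> (nat \<Rightarrow> 'w pmf)
   \<Rightarrow> (nat \<Rightarrow> 'x \<Rightarrow> ('p::finite \<Rightarrow> 'u) \<Rightarrow> 'w \<Rightarrow> 'x \<times> ('p \<Rightarrow> 'z) \<times> ('p \<Rightarrow> real))
   \<Rightarrow> ('p \<Rightarrow> 'h \<Rightarrow> 'k) \<Rightarrow> (nat \<Rightarrow> 'p \<Rightarrow> 'k \<Rightarrow> 'z \<Rightarrow> 'k) \<Rightarrow> 'p \<Rightarrow> bool" where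
  "USI T Uset P1 PW f \<iota>1 \<iota> i \<longleftrightarrow>
    (\<exists>(F :: (nat \<Rightarrow> ('h,'z) hist \<Rightarrow> 'u pmf) \<Rightarrow> nat \<Rightarrow> 'k \<Rightarrow> ('h,'z) hist pmf)
      (\<Phi> :: (nat \<Rightarrow> 'p \<Rightarrow> ('h,'z) hist \<Rightarrow> 'u pmf) \<Rightarrow> nat \<Rightarrow> 'k
              \<Rightarrow> ('x \<times> ('p \<Rightarrow> ('h,'z) hist)) pmf).
      \<forall>g. behavioral Uset g \<longrightarrow>
      (\<forall>t\<in>{1..T}. \<forall>k.
        Pr P1 PW f g t {\<omega>. kcomp \<iota>1 \<iota> i (snd \<omega> i) = k} > 0 \<longrightarrow>
        (\<forall>x h.
          cPr P1 PW f g t {(x, h)} {\<omega>. kcomp \<iota>1 \<iota> i (snd \<omega> i) = k}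
          = pmf (F (\<lambda>s. g s i) t k) (h i)
            * pmf (\<Phi> (\<lambda>s. (g s)(i := undefined)) t k) (x, h(i := undefined)))))"

end

theory Submission
  imports Defs
begin

text \<open>Conditioned on \<open>K\<^sub>t\<^sup>i = k\<close>, unilateral sufficiency makes the mass function of
  \<open>(X\<^sub>t, H\<^sub>t)\<close> a product of a function of \<open>H\<^sub>t\<^sup>i\<close> and a function of \<open>(X\<^sub>t, H\<^sub>t\<^sup>-\<^sup>i)\<close>.
  Hence, given \<open>k\<close>, the history of player \<open>i\<close> is independent of everything that
  player \<open>j \<noteq> i\<close> knows. Since \<open>H\<^sub>t\<^sup>i = h\<close> forces \<open>K\<^sub>t\<^sup>i = k\<close>, Bayes' rule turns this
  conditional independence into the claimed identity.\<close>

no_notation Infinite_Sum.abs_summable_on (infixr \<open>abs'_summable'_on\<close> 46)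

lemma measure_cond_pmf:
  assumes "set_pmf p \<inter> s \<noteq> {}"
  shows "measure (cond_pmf p s) A = measure p (s \<inter> A) / measure p s"
  using assms by (simp add: cond_pmf.rep_eq emeasure_measure_pmf_not_zero)

text \<open>The factors \<open>p\<close>, \<open>q\<close> need be neither nonnegative nor summable; the proof
  replaces them by the sections \<open>P a = pmf \<nu> (a, b\<^sub>0)\<close> and \<open>Q b = pmf \<nu> (a\<^sub>0, b)\<close>
  through a point \<open>(a\<^sub>0, b\<^sub>0)\<close> of positive mass, which are.\<close>

lemma measure_pmf_Times_if_pmf_factors:
  fixes \<nu> :: "('a::countable \<times> 'b::countable) pmf"
  assumes factors: "\<And>a b. pmf \<nu> (a, b) = p a * q b"
  shows "measure \<nu> (A \<times> B) = measure \<nu> (A \<times> UNIV) * measure \<nu> (UNIV \<times> B)"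
proof -
  obtain a0 b0 where ab0: "(a0, b0) \<in> set_pmf \<nu>"
    using set_pmf_not_empty[of \<nu>] by fast
  define c where "c = pmf \<nu> (a0, b0)"
  have "c > 0" using ab0 unfolding c_def by (simp add: pmf_positive)
  define P where "P a = pmf \<nu> (a, b0)" for a
  define Q where "Q b = pmf \<nu> (a0, b)" for b
  have pmf_eq: "pmf \<nu> (a, b) = P a * Q b / c" for a b
    using \<open>c > 0\<close> unfolding P_def Q_def c_def factors by (auto simp: field_simps)
  have P_summable: "P abs_summable_on X" for X
    using pmf_abs_summable[of \<nu> "(\<lambda>a. (a, b0)) ` X"]
    unfolding P_def by (simp add: abs_summable_on_reindex_iff[symmetric] inj_on_def)
  have Q_summable: "Q abs_summable_on X" for X
    using pmf_abs_summable[of \<nu> "(\<lambda>b. (a0, b)) ` X"]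
    unfolding Q_def by (simp add: abs_summable_on_reindex_iff[symmetric] inj_on_def)
  have rectangle: "measure \<nu> (X \<times> Y) = infsetsum P X * infsetsum Q Y / c" for X Y
  proof -
    have "measure \<nu> (X \<times> Y) = infsetsum (\<lambda>(a, b). P a * Q b * (1 / c)) (X \<times> Y)"
      unfolding measure_pmf_conv_infsetsum by (rule infsetsum_cong) (auto simp: pmf_eq)
    also have "\<dots> = infsetsum (\<lambda>(a, b). P a * Q b) (X \<times> Y) * (1 / c)"
      by (subst infsetsum_cmult_left[symmetric])
        (auto intro: infsetsum_cong abs_summable_on_product P_summable Q_summable)
    also have "\<dots> = infsetsum P X * infsetsum Q Y / c"
      by (subst infsetsum_product) (auto intro: P_summable Q_summable)
    finally show ?thesis .
  qed
  have "infsetsum P UNIV * infsetsum Q UNIV = c"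
    using rectangle[of UNIV UNIV] \<open>c > 0\<close> by (simp add: field_simps)
  then show ?thesis
    using \<open>c > 0\<close> unfolding rectangle by (simp add: field_simps)
qed

text \<open>The pair \<open>(x\<^sub>t, h\<^sub>t\<^sup>-\<^sup>i)\<close>, encoded as in \<^const>\<open>USI\<close>.\<close>

definition drop_player :: "'p \<Rightarrow> 'x \<times> ('p \<Rightarrow> 'a) \<Rightarrow> 'x \<times> ('p \<Rightarrow> 'a)" where
  "drop_player i \<omega> = (fst \<omega>, (snd \<omega>)(i := undefined))"

lemma inj_split_player: "inj (\<lambda>\<omega> :: 'x \<times> ('p \<Rightarrow> 'a). (snd \<omega> i, drop_player i \<omega>))"
proof (rule injI)
  fix \<omega> \<omega>' :: "'x \<times> ('p \<Rightarrow> 'a)"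
  assume "(snd \<omega> i, drop_player i \<omega>) = (snd \<omega>' i, drop_player i \<omega>')"
  then have "fst \<omega> = fst \<omega>'" "snd \<omega> = snd \<omega>'"
    unfolding drop_player_def by (metis fst_conv snd_conv fun_upd_triv fun_upd_upd)+
  then show "\<omega> = \<omega>'" by (simp add: prod_eq_iff)
qed

lemma measure_pmf_indep_if_pmf_factors_at_player:
  fixes \<nu> :: "('x::countable \<times> ('p::finite \<Rightarrow> 'a::countable)) pmf"
  assumes factors: "\<And>\<omega>. pmf \<nu> \<omega> = p (snd \<omega> i) * q (drop_player i \<omega>)"
  shows "measure \<nu> ({\<omega>. snd \<omega> i \<in> A} \<inter> drop_player i -` B)
       = measure \<nu> {\<omega>. snd \<omega> i \<in> A} * measure \<nu> (drop_player i -` B)"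
proof -
  define split where "split = (\<lambda>\<omega> :: 'x \<times> ('p \<Rightarrow> 'a). (snd \<omega> i, drop_player i \<omega>))"
  have "inj split" unfolding split_def by (rule inj_split_player)
  define q' where "q' y = (if snd y i = undefined then q y else 0)" for y :: "'x \<times> ('p \<Rightarrow> 'a)"
  have "pmf (map_pmf split \<nu>) (a, y) = p a * q' y" for a y
  proof (cases "snd y i = undefined")
    case True
    then have "(snd y)(i := undefined) = snd y" by (rule fun_upd_idem)
    then have "split (fst y, (snd y)(i := a)) = (a, y)"
      unfolding split_def drop_player_def by simp
    then have "pmf (map_pmf split \<nu>) (a, y) = pmf \<nu> (fst y, (snd y)(i := a))"
      using pmf_map_inj'[OF \<open>inj split\<close>] by metis
    with True \<open>(snd y)(i := undefined) = snd y\<close> show ?thesis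
      unfolding factors q'_def drop_player_def by simp
  next
    case False
    then have "split -` {(a, y)} = {}" unfolding split_def drop_player_def by auto
    with False show ?thesis unfolding pmf_map q'_def by simp
  qed
  then have "measure (map_pmf split \<nu>) (A \<times> B)
      = measure (map_pmf split \<nu>) (A \<times> UNIV) * measure (map_pmf split \<nu>) (UNIV \<times> B)"
    by (rule measure_pmf_Times_if_pmf_factors)
  moreover have "split -` (A \<times> B) = {\<omega>. snd \<omega> i \<in> A} \<inter> drop_player i -` B"
    and "split -` (A \<times> UNIV) = {\<omega>. snd \<omega> i \<in> A}"
    and "split -` (UNIV \<times> B) = drop_player i -` B"
    unfolding split_def by auto
  ultimately show ?thesis by (simp add: measure_map_pmf)
qed

lemma USI_cond_pmf_factors:
  fixes P1 :: "('x \<times> ('p::finite \<Rightarrow> 'h)) pmf"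
    and g :: "nat \<Rightarrow> 'p \<Rightarrow> ('h, 'z) hist \<Rightarrow> 'u pmf"
  assumes "USI T Uset P1 PW f \<iota>1 \<iota> i" and "behavioral Uset g" and "t \<in> {1..T}"
    and "Pr P1 PW f g t {\<omega>. kcomp \<iota>1 \<iota> i (snd \<omega> i) = k} > 0"
  obtains p q where "\<And>\<omega>. pmf (cond_pmf (traj_aux P1 PW f g (t - 1))
      {\<omega>. kcomp \<iota>1 \<iota> i (snd \<omega> i) = k}) \<omega> = p (snd \<omega> i) * q (drop_player i \<omega>)"
proof -
  define \<mu> where "\<mu> = traj_aux P1 PW f g (t - 1)"
  define K where "K = {\<omega> :: 'x \<times> ('p \<Rightarrow> ('h, 'z) hist). kcomp \<iota>1 \<iota> i (snd \<omega> i) = k}"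
  obtain F \<Phi> where "\<And>x h. cPr P1 PW f g t {(x, h)} K
      = pmf (F (\<lambda>s. g s i) t k) (h i) * pmf (\<Phi> (\<lambda>s. (g s)(i := undefined)) t k) (x, h(i := undefined))"
    using assms unfolding USI_def K_def by blast
  moreover have "pmf (cond_pmf \<mu> K) \<omega> = cPr P1 PW f g t {\<omega>} K" for \<omega>
  proof -
    have "set_pmf \<mu> \<inter> K \<noteq> {}"
      using assms(4) measure_pmf_zero_iff[of \<mu> K] unfolding Pr_def \<mu>_def K_def by auto
    then show ?thesis
      using measure_cond_pmf[of \<mu> K "{\<omega>}"]
      unfolding cPr_def Pr_def \<mu>_def by (simp add: measure_pmf_single Int_commute)
  qed
  ultimately have "pmf (cond_pmf \<mu> K) \<omega>
      = pmf (F (\<lambda>s. g s i) t k) (snd \<omega> i) * pmf (\<Phi> (\<lambda>s. (g s)(i := undefined)) t k) (drop_player i \<omega>)"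
    for \<omega>
    unfolding drop_player_def by (cases \<omega>) simp
  then show thesis unfolding \<mu>_def K_def by (rule that)
qed

lemma cond_prob_factor_through_if_cond_indep:
  fixes \<mu> :: "'a pmf"
  assumes "E \<subseteq> K" and "set_pmf \<mu> \<inter> K \<noteq> {}"
    and indep: "measure (cond_pmf \<mu> K) (E \<inter> D) = measure (cond_pmf \<mu> K) E * measure (cond_pmf \<mu> K) D"
  shows "measure \<mu> (E \<inter> D) / measure \<mu> D
       = measure \<mu> (E \<inter> K) / measure \<mu> K * (measure \<mu> (K \<inter> D) / measure \<mu> D)"
proof -
  have "measure \<mu> K \<noteq> 0" using assms(2) by (simp add: measure_pmf_zero_iff)
  moreover have "K \<inter> (E \<inter> D) = E \<inter> D" and "K \<inter> E = E"
    using \<open>E \<subseteq> K\<close> by auto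
  ultimately have "measure \<mu> (E \<inter> D) = measure \<mu> E * measure \<mu> (K \<inter> D) / measure \<mu> K"
    using indep unfolding measure_cond_pmf[OF assms(2)] by (simp add: field_simps)
  moreover have "E \<inter> K = E" using \<open>E \<subseteq> K\<close> by auto
  ultimately show ?thesis by simp
qed

theorem lemma7:
  fixes T :: nat
    and Uset :: "nat \<Rightarrow> 'p::finite \<Rightarrow> 'u::finite set"
    and P1 :: "('x::finite \<times> ('p \<Rightarrow> 'h::finite)) pmf"
    and PW :: "nat \<Rightarrow> 'w::finite pmf"
    and f :: "nat \<Rightarrow> 'x \<Rightarrow> ('p \<Rightarrow> 'u) \<Rightarrow> 'w \<Rightarrow> 'x \<times> ('p \<Rightarrow> 'z::finite) \<times> ('p \<Rightarrow> real)"
    and act :: "nat \<Rightarrow> 'p \<Rightarrow> 'z \<Rightarrow> 'u"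
    and \<iota>1 :: "'p \<Rightarrow> 'h \<Rightarrow> 'k::finite"
    and \<iota> :: "nat \<Rightarrow> 'p \<Rightarrow> 'k \<Rightarrow> 'z \<Rightarrow> 'k"
    and g :: "nat \<Rightarrow> 'p \<Rightarrow> ('h,'z) hist \<Rightarrow> 'u pmf"
    and i j :: 'p and t :: nat
    and hi hj :: "('h,'z) hist"
  assumes game: "game_model T Uset f act"
    and usi: "USI T Uset P1 PW f \<iota>1 \<iota> i"
    and ji: "j \<noteq> i"
    and beh: "behavioral Uset g"
    and tT: "t \<in> {1..T}"
    and hi_len: "length (snd hi) = t - 1"
    and hj_len: "length (snd hj) = t - 1"
    and posk: "Pr P1 PW f g t {\<omega>. kcomp \<iota>1 \<iota> i (snd \<omega> i) = kcomp \<iota>1 \<iota> i hi} > 0"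
    and poshj: "Pr P1 PW f g t {\<omega>. snd \<omega> j = hj} > 0"
  shows "cPr P1 PW f g t {\<omega>. snd \<omega> i = hi} {\<omega>. snd \<omega> j = hj}
       = cPr P1 PW f g t {\<omega>. snd \<omega> i = hi} {\<omega>. kcomp \<iota>1 \<iota> i (snd \<omega> i) = kcomp \<iota>1 \<iota> i hi}
         * cPr P1 PW f g t {\<omega>. kcomp \<iota>1 \<iota> i (snd \<omega> i) = kcomp \<iota>1 \<iota> i hi} {\<omega>. snd \<omega> j = hj}"
proof -
  define \<mu> where "\<mu> = traj_aux P1 PW f g (t - 1)"
  define K where "K = {\<omega> :: 'x \<times> ('p \<Rightarrow> ('h,'z) hist). kcomp \<iota>1 \<iota> i (snd \<omega> i) = kcomp \<iota>1 \<iota> i hi}"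
  define Hi where "Hi = {\<omega> :: 'x \<times> ('p \<Rightarrow> ('h,'z) hist). snd \<omega> i = hi}"
  define Hj where "Hj = {\<omega> :: 'x \<times> ('p \<Rightarrow> ('h,'z) hist). snd \<omega> j = hj}"
  have K_nonempty: "set_pmf \<mu> \<inter> K \<noteq> {}"
    using posk measure_pmf_zero_iff[of \<mu> K] unfolding Pr_def \<mu>_def K_def by auto
  obtain p q where "\<And>\<omega>. pmf (cond_pmf \<mu> K) \<omega> = p (snd \<omega> i) * q (drop_player i \<omega>)"
    using USI_cond_pmf_factors[OF usi beh tT posk] unfolding \<mu>_def K_def by blast
  then have "measure (cond_pmf \<mu> K) ({\<omega>. snd \<omega> i \<in> {hi}} \<inter> drop_player i -` {y. snd y j = hj})
      = measure (cond_pmf \<mu> K) {\<omega>. snd \<omega> i \<in> {hi}}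
        * measure (cond_pmf \<mu> K) (drop_player i -` {y. snd y j = hj})"
    by (rule measure_pmf_indep_if_pmf_factors_at_player)
  moreover have "{\<omega>. snd \<omega> i \<in> {hi}} = Hi" and "drop_player i -` {y. snd y j = hj} = Hj"
    using ji unfolding Hi_def Hj_def drop_player_def by auto
  moreover have "Hi \<subseteq> K" unfolding Hi_def K_def by auto
  ultimately have "measure \<mu> (Hi \<inter> Hj) / measure \<mu> Hj
      = measure \<mu> (Hi \<inter> K) / measure \<mu> K * (measure \<mu> (K \<inter> Hj) / measure \<mu> Hj)"
    using K_nonempty by (simp add: cond_prob_factor_through_if_cond_indep)
  then show ?thesis unfolding cPr_def Pr_def \<mu>_def Hi_def Hj_def K_def .
qed

end
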